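(* Consider an $N$-player finite-horizon LQ game, viewed as the quadratic game in the stacked inputs $U_1,\ldots,U_N$ described in the context, under its gradient-based learning dynamics with an arbitrary disturbance in player $i$'s gradient. If player $j\neq i$ is disturbance decoupled from player $i$, then $$\begin{bmatrix}B_j^\top\\ B_j^\top A^\top\\ \vdots\\ B_j^\top (A^\top)^{T-1}\end{bmatrix}Q_j\begin{bmatrix}B_i & AB_i & \cdots & A^{T-1}B_i\end{bmatrix}=0.$$ Moreover, if in addition $Q_j$ is positive definite and $T\ge m$, then the controllable subspace of the pair $(\tilde A,\tilde B_i)$ is contained in the unobservable subspace of the pair $(\tilde B_j^\top,\tilde A^\top)$ (output matrix $\tilde B_j^\top$, state matrix $\tilde A^\top$), where $\tilde A=Q_j^{1/2}AQ_j^{-1/2}$, $\tilde B_i=Q_j^{1/2}B_i$, $\tilde B_j=Q_j^{1/2}B_j$.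
   Context: Finite-horizon LQ game: state $z^t\in\mathbb{R}^m$, initial state $z^0$, horizon $T$, dynamics $z^{t+1}=Az^t+\sum_{\ell=1}^N B_\ell u_\ell^t$ ($t=0,\ldots,T-1$), with $A\in\mathbb{R}^{m\times m}$, $B_\ell\in\mathbb{R}^{m\times m_\ell}$. Player $\ell$ chooses $U_\ell=(u_\ell^0,\ldots,u_\ell^{T-1})\in\mathbb{R}^{n_\ell}$, $n_\ell=Tm_\ell$, to minimize $\tfrac12\big(\sum_{t=0}^T (z^t)^\top Q_\ell z^t+\sum_{t=0}^{T-1}(u_\ell^t)^\top R_\ell u_\ell^t\big)$, with $Q_\ell\in\mathbb{R}^{m\times m}$, $R_\ell\in\mathbb{R}^{m_\ell\times m_\ell}$ symmetric. Let $n=\sum_\ell n_\ell$. Writing $Z=(z^0,\ldots,z^T)=\sum_\ell G_\ell U_\ell+Hz^0$, where $H=[I;A;\ldots;A^T]$ and $G_\ell\in\mathbb{R}^{(T+1)m\times Tm_\ell}$ has block $(t,s)$ ($t=0,\ldots,T$, $s=0,\ldots,T-1$) equal to $A^{t-1-s}B_\ell$ if $s\le t-1$ and $0$ otherwise, the cost of player $\ell$ is $f_\ell(U)=\tfrac12(\sum_q G_qU_q+Hz^0)^\top\bar Q_\ell(\sum_q G_qU_q+Hz^0)+\tfrac12U_\ell^\top\bar R_\ell U_\ell$ with $\bar Q_\ell=\mathrm{blkdiag}(Q_\ell,\ldots,Q_\ell)$ ($T+1$ blocks), $\bar R_\ell=\mathrm{blkdiag}(R_\ell,\ldots,R_\ell)$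 ($T$ blocks). With step sizes $\gamma_\ell>0$ and $\Gamma=\mathrm{blkdiag}(\gamma_1I_{n_1},\ldots,\gamma_NI_{n_N})$, the undisturbed learning dynamics are $U^{k+1}=WU^k-\Gamma c$ where $c=(G_1^\top\bar Q_1Hz^0,\ldots,G_N^\top\bar Q_NHz^0)$, $W=I_n-M$, and $M$ is the block matrix with $M_{\ell q}=\gamma_\ell G_\ell^\top\bar Q_\ell G_q$ for $\ell\neq q$ and $M_{\ell\ell}=\gamma_\ell(G_\ell^\top\bar Q_\ell G_\ell+\bar R_\ell)$. Disturbed dynamics: $Y^{k+1}=WY^k-\Gamma c-\Gamma d^k$ with $d^k\in\mathcal{D}_i=\{d\in\mathbb{R}^n: d_q=0\ \forall q\neq i\}$ arbitrary. Player $j\neq i$ is disturbance decoupled from player $i$ if for every initial $U^0$, with $Y^0=U^0$, one has $Y^k_j=U^k_j$ for all $k\ge0$ and every such disturbance sequence. The controllable subspace of $(\tilde A,\tilde B_i)$ is $\mathrm{im}[\tilde B_i,\tilde A\tilde B_i,\ldots,\tilde A^{m-1}\tilde B_i]$; the unobservable subspace of $(C,F)$ is $\{x: CF^px=0\ \forall p\ge0\}$. *)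

theory Defs
  imports "Jordan_Normal_Form.Matrix"
begin

text \<open>Player index l < N; state dimension m; player l's input
dimension is mi l; the stacked input of player l has dimension T * mi l.
A collection of player vectors U :: nat => real vec represents the stacked U = (U_1,...,U_N).\<close>

definition G_mat :: "nat \<Rightarrow> nat \<Rightarrow> real mat \<Rightarrow> real mat \<Rightarrow> nat \<Rightarrow> real mat" where
  "G_mat m T A B ml = mat (Suc T * m) (T * ml)
     (\<lambda>(r, c). let t = r div m; a = r mod m; s = c div ml; b = c mod ml in
        if s < t then (A ^\<^sub>m (t - 1 - s) * B) $$ (a, b) else 0)"

definition H_mat :: "nat \<Rightarrow> nat \<Rightarrow> real mat \<Rightarrow> real mat" where
  "H_mat m T A = mat (Suc T * m) m (\<lambda>(r, c). (A ^\<^sub>m (r div m)) $$ (r mod m, c))"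

definition blkdiag_rep :: "nat \<Rightarrow> nat \<Rightarrow> real mat \<Rightarrow> real mat" where
  "blkdiag_rep k d X = mat (k * d) (k * d)
     (\<lambda>(r, c). if r div d = c div d then X $$ (r mod d, c mod d) else 0)"

definition M_blk :: "nat \<Rightarrow> nat \<Rightarrow> real mat \<Rightarrow> (nat \<Rightarrow> real mat) \<Rightarrow> (nat \<Rightarrow> nat)
     \<Rightarrow> (nat \<Rightarrow> real mat) \<Rightarrow> (nat \<Rightarrow> real mat) \<Rightarrow> (nat \<Rightarrow> real) \<Rightarrow> nat \<Rightarrow> nat \<Rightarrow> real mat" where
  "M_blk m T A B mi Q R \<gamma> l q =
     \<gamma> l \<cdot>\<^sub>m (transpose_mat (G_mat m T A (B l) (mi l)) * blkdiag_rep (Suc T) m (Q l)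
                 * G_mat m T A (B q) (mi q)
              + (if l = q then blkdiag_rep T (mi l) (R l) else 0\<^sub>m (T * mi l) (T * mi q)))"

definition c_blk :: "nat \<Rightarrow> nat \<Rightarrow> real mat \<Rightarrow> (nat \<Rightarrow> real mat) \<Rightarrow> (nat \<Rightarrow> nat)
     \<Rightarrow> (nat \<Rightarrow> real mat) \<Rightarrow> real vec \<Rightarrow> nat \<Rightarrow> real vec" where
  "c_blk m T A B mi Q z0 l =
     (transpose_mat (G_mat m T A (B l) (mi l)) * blkdiag_rep (Suc T) m (Q l) * H_mat m T A) *\<^sub>v z0"

fun vsum :: "nat \<Rightarrow> (nat \<Rightarrow> real vec) \<Rightarrow> nat \<Rightarrow> real vec" where
  "vsum d f 0 = 0\<^sub>v d"
| "vsum d f (Suc k) = vsum d f k + f k"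

text \<open>One step U -> W U - Gamma c - Gamma dv, blockwise (W = I - M); dv is the
disturbance, given blockwise (dv l is the l-th block).\<close>
definition lq_step :: "nat \<Rightarrow> nat \<Rightarrow> nat \<Rightarrow> real mat \<Rightarrow> (nat \<Rightarrow> real mat) \<Rightarrow> (nat \<Rightarrow> nat)
     \<Rightarrow> (nat \<Rightarrow> real mat) \<Rightarrow> (nat \<Rightarrow> real mat) \<Rightarrow> (nat \<Rightarrow> real) \<Rightarrow> real vec
     \<Rightarrow> (nat \<Rightarrow> real vec) \<Rightarrow> (nat \<Rightarrow> real vec) \<Rightarrow> (nat \<Rightarrow> real vec)" where
  "lq_step N m T A B mi Q R \<gamma> z0 dv U = (\<lambda>l.
     U l - vsum (T * mi l) (\<lambda>q. M_blk m T A B mi Q R \<gamma> l q *\<^sub>v U q) N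
         - \<gamma> l \<cdot>\<^sub>v c_blk m T A B mi Q z0 l - \<gamma> l \<cdot>\<^sub>v dv l)"

text \<open>Trajectory of the learning dynamics with disturbance sequence d (d k is d^k, blockwise).
The undisturbed dynamics is the case d k = 0.\<close>
fun lq_traj :: "nat \<Rightarrow> nat \<Rightarrow> nat \<Rightarrow> real mat \<Rightarrow> (nat \<Rightarrow> real mat) \<Rightarrow> (nat \<Rightarrow> nat)
     \<Rightarrow> (nat \<Rightarrow> real mat) \<Rightarrow> (nat \<Rightarrow> real mat) \<Rightarrow> (nat \<Rightarrow> real) \<Rightarrow> real vec
     \<Rightarrow> (nat \<Rightarrow> nat \<Rightarrow> real vec) \<Rightarrow> (nat \<Rightarrow> real vec) \<Rightarrow> nat \<Rightarrow> (nat \<Rightarrow> real vec)" where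
  "lq_traj N m T A B mi Q R \<gamma> z0 d U0 0 = U0"
| "lq_traj N m T A B mi Q R \<gamma> z0 d U0 (Suc k) =
     lq_step N m T A B mi Q R \<gamma> z0 (d k) (lq_traj N m T A B mi Q R \<gamma> z0 d U0 k)"

definition dist_seq_in :: "nat \<Rightarrow> (nat \<Rightarrow> nat) \<Rightarrow> nat \<Rightarrow> nat \<Rightarrow> (nat \<Rightarrow> nat \<Rightarrow> real vec) \<Rightarrow> bool" where
  "dist_seq_in N ni T i d \<longleftrightarrow>
     (\<forall>k. \<forall>q<N. d k q \<in> carrier_vec (ni q) \<and> (q \<noteq> i \<longrightarrow> d k q = 0\<^sub>v (ni q)))"

definition dist_decoupled :: "nat \<Rightarrow> nat \<Rightarrow> nat \<Rightarrow> real mat \<Rightarrow> (nat \<Rightarrow> real mat) \<Rightarrow> (nat \<Rightarrow> nat)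
     \<Rightarrow> (nat \<Rightarrow> real mat) \<Rightarrow> (nat \<Rightarrow> real mat) \<Rightarrow> (nat \<Rightarrow> real) \<Rightarrow> real vec \<Rightarrow> nat \<Rightarrow> nat \<Rightarrow> bool" where
  "dist_decoupled N m T A B mi Q R \<gamma> z0 i j \<longleftrightarrow>
     (\<forall>U0 d. (\<forall>l<N. U0 l \<in> carrier_vec (T * mi l)) \<longrightarrow> dist_seq_in N (\<lambda>l. T * mi l) T i d \<longrightarrow>
        (\<forall>k. lq_traj N m T A B mi Q R \<gamma> z0 d U0 k j
             = lq_traj N m T A B mi Q R \<gamma> z0 (\<lambda>_ l. 0\<^sub>v (T * mi l)) U0 k j))"

definition ctrb_mat :: "nat \<Rightarrow> nat \<Rightarrow> real mat \<Rightarrow> real mat \<Rightarrow> nat \<Rightarrow> real mat" where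
  "ctrb_mat m k A B mB = mat m (k * mB) (\<lambda>(r, c). (A ^\<^sub>m (c div mB) * B) $$ (r, c mod mB))"

definition obs_stack :: "nat \<Rightarrow> nat \<Rightarrow> real mat \<Rightarrow> real mat \<Rightarrow> nat \<Rightarrow> real mat" where
  "obs_stack m k A B mB = mat (k * mB) m
     (\<lambda>(r, c). (transpose_mat B * (transpose_mat A) ^\<^sub>m (r div mB)) $$ (r mod mB, c))"

definition sym_mat :: "real mat \<Rightarrow> bool" where
  "sym_mat X \<longleftrightarrow> transpose_mat X = X"

definition pos_def_mat :: "nat \<Rightarrow> real mat \<Rightarrow> bool" where
  "pos_def_mat n X \<longleftrightarrow> X \<in> carrier_mat n n \<and> sym_mat X \<and>
     (\<forall>x \<in> carrier_vec n. x \<noteq> 0\<^sub>v n \<longrightarrow> x \<bullet> (X *\<^sub>v x) > 0)"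

definition ctrb_subspace :: "nat \<Rightarrow> real mat \<Rightarrow> real mat \<Rightarrow> nat \<Rightarrow> real vec set" where
  "ctrb_subspace n F Bc mB = {ctrb_mat n n F Bc mB *\<^sub>v x | x. x \<in> carrier_vec (n * mB)}"

definition unobs_subspace :: "nat \<Rightarrow> real mat \<Rightarrow> real mat \<Rightarrow> real vec set" where
  "unobs_subspace n C F = {x \<in> carrier_vec n. \<forall>p. C *\<^sub>v ((F ^\<^sub>m p) *\<^sub>v x) = 0\<^sub>v (dim_row C)}"

end

theory Submission
  imports Defs "Jordan_Normal_Form.VS_Connect"
begin

(* Decoupling means that a disturbance injected into player i's update never reaches player j.
   Injecting it once and following it for two steps shows that the coupling block M_ji, a
   positive multiple of G_j^T Qbar_j G_i, vanishes.  Block (p,s) of G_j^T Qbar_j G_i is the sum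
   of the terms (A^a B_j)^T Q_j A^b B_i over (a,b) = (t-1-p, t-1-s), max p s < t <= T; blocks
   (p,s) and (p+1,s+1) differ by the single term with t = T, so every term with a, b < T
   vanishes, which is the first claim.  After the change of coordinates by S = Q_j^(1/2) these
   terms are the blocks of the product of the observability matrix of (B~_j^T, A~^T) with the
   controllability matrix of (A~, B~_i), so this product is zero when T >= m.  Controllable
   states are therefore annihilated by the first m observability rows, and hence, since the
   Krylov sequence x, A~^T x, ... stabilises after m steps, by all of them. *)


lemma pow_mat_Suc_left:
  fixes F :: "'a::semiring_1 mat"
  assumes F: "F \<in> carrier_mat n n"
  shows "F ^\<^sub>m Suc p = F * F ^\<^sub>m p"
proof (induction p)
  case 0
  show ?case using F by simp
next
  case (Suc p)
  have "F ^\<^sub>m Suc (Suc p) = (F * F ^\<^sub>m p) * F" using Suc by simp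
  also have "\<dots> = F * F ^\<^sub>m Suc p" using F by (simp add: assoc_mult_mat[of _ n n _ n _ n])
  finally show ?case .
qed

lemma pow_mat_mult_vec_carrier [simp]:
  "F \<in> carrier_mat n n \<Longrightarrow> v \<in> carrier_vec n \<Longrightarrow> F ^\<^sub>m p *\<^sub>v v \<in> carrier_vec n"
  by (rule mult_mat_vec_carrier[of _ n n]) auto

lemma pow_mat_Suc_mult_vec:
  fixes F :: "'a::semiring_1 mat"
  assumes F: "F \<in> carrier_mat n n" and v: "v \<in> carrier_vec n"
  shows "F ^\<^sub>m Suc p *\<^sub>v v = F *\<^sub>v (F ^\<^sub>m p *\<^sub>v v)"
  unfolding pow_mat_Suc_left[OF F] using F v by (simp del: pow_mat.simps add: assoc_mult_mat_vec[of _ n n _ n])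

lemma transpose_pow_mat:
  fixes A :: "'a::comm_semiring_1 mat"
  assumes A: "A \<in> carrier_mat n n"
  shows "transpose_mat (A ^\<^sub>m p) = transpose_mat A ^\<^sub>m p"
proof (induction p)
  case 0
  show ?case using A by simp
next
  case (Suc p)
  have "transpose_mat (A ^\<^sub>m Suc p) = transpose_mat A * transpose_mat (A ^\<^sub>m p)"
    using A by (simp add: transpose_mult[of _ n n _ n])
  also have "\<dots> = transpose_mat A ^\<^sub>m Suc p"
    using Suc pow_mat_Suc_left[of "transpose_mat A" n] A by simp
  finally show ?case .
qed

lemma similar_pow_mult:
  fixes A S Sinv B :: "real mat"
  assumes A: "A \<in> carrier_mat m m" and S: "S \<in> carrier_mat m m" and Sinv: "Sinv \<in> carrier_mat m m"
    and inv: "S * Sinv = 1\<^sub>m m" "Sinv * S = 1\<^sub>m m" and B: "B \<in> carrier_mat m k"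
  shows "(S * A * Sinv) ^\<^sub>m p * (S * B) = S * (A ^\<^sub>m p * B)"
proof -
  have "similar_mat_wit (S * A * Sinv) A S Sinv"
    using A S Sinv inv unfolding similar_mat_wit_def by auto
  then have "(S * A * Sinv) ^\<^sub>m p = S * A ^\<^sub>m p * Sinv"
    using similar_mat_wit_pow unfolding similar_mat_wit_def Let_def by blast
  moreover have "Sinv * (S * B) = B"
    using Sinv S B inv(2) by (simp flip: assoc_mult_mat[of Sinv m m S m B k])
  ultimately show ?thesis
    using A S Sinv B by (simp add: assoc_mult_mat[of _ m m _ m _ k] mult_carrier_mat[of _ m m])
qed

section \<open>Krylov sequences and the unobservable subspace\<close>

definition krylov_set :: "'a::semiring_1 mat \<Rightarrow> 'a vec \<Rightarrow> nat \<Rightarrow> 'a vec set" where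
  "krylov_set F v k = (\<lambda>p. F ^\<^sub>m p *\<^sub>v v) ` {..<k}"

lemma krylov_set_Suc: "krylov_set F v (Suc k) = insert (F ^\<^sub>m k *\<^sub>v v) (krylov_set F v k)"
  unfolding krylov_set_def by (simp add: lessThan_Suc)

lemma krylov_set_carrier:
  "F \<in> carrier_mat n n \<Longrightarrow> v \<in> carrier_vec n \<Longrightarrow> krylov_set F v k \<subseteq> carrier_vec n"
  unfolding krylov_set_def by auto

context vec_space
begin

lemma submodule_mat_preimage:
  assumes F: "F \<in> carrier_mat r n"
    and W: "0\<^sub>v r \<in> W" "\<And>x y. x \<in> W \<Longrightarrow> y \<in> W \<Longrightarrow> x + y \<in> W" "\<And>c x. x \<in> W \<Longrightarrow> c \<cdot>\<^sub>v x \<in> W"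
  shows "submodule class_ring {w \<in> carrier_vec n. F *\<^sub>v w \<in> W} V"
proof -
  have "F *\<^sub>v (x + y) = F *\<^sub>v x + F *\<^sub>v y" if "x \<in> carrier_vec n" "y \<in> carrier_vec n" for x y
    using F that by (simp add: mult_add_distrib_mat_vec)
  moreover have "F *\<^sub>v (c \<cdot>\<^sub>v x) = c \<cdot>\<^sub>v (F *\<^sub>v x)" if "x \<in> carrier_vec n" for x c
    using F that by (simp add: mult_mat_vec)
  moreover have "F *\<^sub>v 0\<^sub>v n = 0\<^sub>v r" using F by (intro eq_vecI) auto
  ultimately show ?thesis
    using W by unfold_locales (auto simp: submodule_def)
qed

lemma krylov_set_dependent:
  assumes F: "F \<in> carrier_mat n n" and v: "v \<in> carrier_vec n"
  shows "\<exists>k\<le>n. F ^\<^sub>m k *\<^sub>v v \<in> span (krylov_set F v k)"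
proof (rule ccontr)
  assume indep: "\<not> ?thesis"
  have "lin_indpt (krylov_set F v k) \<and> card (krylov_set F v k) = k" if "k \<le> Suc n" for k
    using that
  proof (induction k)
    case 0
    show ?case by (simp add: krylov_set_def lin_dep_def)
  next
    case (Suc k)
    let ?K = "krylov_set F v k" and ?w = "F ^\<^sub>m k *\<^sub>v v"
    have K: "?K \<subseteq> carrier_vec n" using F v by (rule krylov_set_carrier)
    have li: "lin_indpt ?K" and card: "card ?K = k" using Suc by auto
    have w: "?w \<in> carrier_vec n" using F v by simp
    have new: "?w \<notin> span ?K" using indep Suc.prems by auto
    then have "?w \<notin> ?K" using in_own_span[OF K] by auto
    moreover have "finite ?K" by (simp add: krylov_set_def)
    ultimately show ?case
      unfolding krylov_set_Suc using lin_dep_iff_in_span[OF K li w] new card by simp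
  qed
  then have "lin_indpt (krylov_set F v (Suc n))" "card (krylov_set F v (Suc n)) = Suc n" by auto
  with li_le_dim(2)[OF fin_dim krylov_set_carrier[OF F v]] dim_is_n show False by fastforce
qed

lemma krylov_span_invariant:
  assumes F: "F \<in> carrier_mat n n" and v: "v \<in> carrier_vec n"
    and closed: "F ^\<^sub>m k *\<^sub>v v \<in> span (krylov_set F v k)"
  shows "F ^\<^sub>m p *\<^sub>v v \<in> span (krylov_set F v k)"
proof -
  let ?K = "krylov_set F v k"
  have K: "?K \<subseteq> carrier_vec n" using F v by (rule krylov_set_carrier)
  note span = submodule.m_closed[OF span_is_submodule[OF K]] submodule.smult_closed[OF span_is_submodule[OF K]]
  define P where "P = {w \<in> carrier_vec n. F *\<^sub>v w \<in> span ?K}"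
  have P: "submodule class_ring P V"
    unfolding P_def using F by (rule submodule_mat_preimage) (use span_zero span in auto)
  have "?K \<subseteq> P"
  proof
    fix w assume "w \<in> ?K"
    then obtain q where q: "q < k" "w = F ^\<^sub>m q *\<^sub>v v" unfolding krylov_set_def by auto
    have "F ^\<^sub>m Suc q *\<^sub>v v \<in> span ?K"
    proof (cases "Suc q = k")
      case False
      with q have "F ^\<^sub>m Suc q *\<^sub>v v \<in> ?K"
        unfolding krylov_set_def by (intro imageI) (auto simp del: pow_mat.simps)
      then show ?thesis using in_own_span[OF K] by auto
    qed (use closed in simp)
    then show "w \<in> P" using q F v unfolding P_def by (simp add: pow_mat_Suc_mult_vec del: pow_mat.simps)
  qed
  then have "span ?K \<subseteq> P" using span_is_subset P by blast
  show ?thesis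
  proof (induction p)
    case 0
    have "F ^\<^sub>m 0 *\<^sub>v v \<in> ?K \<or> k = 0"
      unfolding krylov_set_def by (auto simp del: pow_mat.simps)
    then show ?case using in_own_span[OF K] closed by auto
  next
    case (Suc p)
    with \<open>span ?K \<subseteq> P\<close> show ?case
      unfolding P_def using F v by (auto simp: pow_mat_Suc_mult_vec simp del: pow_mat.simps)
  qed
qed

end

lemma unobs_subspace_eq_finite_horizon:
  fixes F C :: "real mat"
  assumes F: "F \<in> carrier_mat n n" and C: "C \<in> carrier_mat r n"
  shows "unobs_subspace n C F = {x \<in> carrier_vec n. \<forall>p<n. C *\<^sub>v (F ^\<^sub>m p *\<^sub>v x) = 0\<^sub>v r}"
proof (intro equalityI subsetI)
  fix x assume "x \<in> unobs_subspace n C F"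
  then show "x \<in> {x \<in> carrier_vec n. \<forall>p<n. C *\<^sub>v (F ^\<^sub>m p *\<^sub>v x) = 0\<^sub>v r}"
    using C unfolding unobs_subspace_def by auto
next
  interpret vec_space "TYPE(real)" n .
  fix x assume "x \<in> {x \<in> carrier_vec n. \<forall>p<n. C *\<^sub>v (F ^\<^sub>m p *\<^sub>v x) = 0\<^sub>v r}"
  then have x: "x \<in> carrier_vec n" and small: "\<And>p. p < n \<Longrightarrow> C *\<^sub>v (F ^\<^sub>m p *\<^sub>v x) = 0\<^sub>v r"
    by auto
  obtain k where "k \<le> n" and closed: "F ^\<^sub>m k *\<^sub>v x \<in> span (krylov_set F x k)"
    using krylov_set_dependent[OF F x] by blast
  define Z where "Z = {w \<in> carrier_vec n. C *\<^sub>v w \<in> {0\<^sub>v r}}"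
  have "submodule class_ring Z V" unfolding Z_def using C by (rule submodule_mat_preimage) auto
  moreover have "krylov_set F x k \<subseteq> Z"
    using small \<open>k \<le> n\<close> F x unfolding krylov_set_def Z_def by auto
  ultimately have "span (krylov_set F x k) \<subseteq> Z" using span_is_subset by blast
  then have "C *\<^sub>v (F ^\<^sub>m p *\<^sub>v x) = 0\<^sub>v r" for p
    using krylov_span_invariant[OF F x closed] unfolding Z_def by blast
  then show "x \<in> unobs_subspace n C F" using x C unfolding unobs_subspace_def by auto
qed

lemma sum_lessThan_mult:
  fixes f :: "nat \<Rightarrow> 'b::comm_monoid_add"
  shows "(\<Sum>k<n * d. f k) = (\<Sum>t<n. \<Sum>x<d. f (t * d + x))"
proof -
  have "(\<Sum>k<n * d. f k) = (\<Sum>t<n. sum f {t * d..<t * d + d})" by (rule sum.nat_group[symmetric])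
  also have "\<dots> = (\<Sum>t<n. \<Sum>x<d. f (t * d + x))"
    using sum.shift_bounds_nat_ivl[of f 0 "_ * d" d] by (simp add: atLeast0LessThan add.commute)
  finally show ?thesis .
qed

lemma block_index_less:
  fixes t k d x :: nat
  assumes "t < k" "x < d"
  shows "t * d + x < k * d"
proof -
  have "t * d + x < Suc t * d" using assms by simp
  also have "\<dots> \<le> k * d" using assms by (intro mult_le_mono1) simp
  finally show ?thesis .
qed

lemma block_index_cases:
  fixes r k d :: nat
  assumes "r < k * d"
  obtains t x where "t < k" "x < d" "r = t * d + x"
proof
  show "r div d < k" using assms by (simp add: less_mult_imp_div_less)
  show "r mod d < d" using assms by (cases d) auto
qed simp

lemma mat_eq_0_blockwise_iff:
  fixes X :: "'a::zero mat"
  assumes "X \<in> carrier_mat (k1 * d1) (k2 * d2)"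
  shows "X = 0\<^sub>m (k1 * d1) (k2 * d2) \<longleftrightarrow>
    (\<forall>p<k1. \<forall>a<d1. \<forall>s<k2. \<forall>b<d2. X $$ (p * d1 + a, s * d2 + b) = 0)"
proof
  assume "\<forall>p<k1. \<forall>a<d1. \<forall>s<k2. \<forall>b<d2. X $$ (p * d1 + a, s * d2 + b) = 0"
  then show "X = 0\<^sub>m (k1 * d1) (k2 * d2)"
    using assms by (intro eq_matI) (auto elim!: block_index_cases)
qed (use assms block_index_less in auto)

lemma mult_mat_entry_blockwise:
  fixes X Y :: "'a::comm_semiring_0 mat"
  assumes "X \<in> carrier_mat r (k * d)" "Y \<in> carrier_mat (k * d) c" "i < r" "j < c"
  shows "(X * Y) $$ (i, j) = (\<Sum>t<k. \<Sum>x<d. X $$ (i, t * d + x) * Y $$ (t * d + x, j))"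
  using assms by (simp add: scalar_prod_def atLeast0LessThan sum_lessThan_mult)

lemma mult_mult_entry:
  fixes P Q R :: "'a::comm_semiring_0 mat"
  assumes "P \<in> carrier_mat k m" "Q \<in> carrier_mat m m" "R \<in> carrier_mat m l" "a < k" "b < l"
  shows "(P * Q * R) $$ (a, b) = (\<Sum>x<m. (\<Sum>y<m. P $$ (a, y) * Q $$ (y, x)) * R $$ (x, b))"
  using assms
  by (simp add: scalar_prod_def atLeast0LessThan sum_distrib_left sum_distrib_right mult.assoc)
     (rule sum.swap)

lemma transpose_mult_mult_entry:
  fixes P Q R :: "'a::comm_semiring_0 mat"
  assumes "P \<in> carrier_mat m k" "Q \<in> carrier_mat m m" "R \<in> carrier_mat m l" "a < k" "b < l"
  shows "(transpose_mat P * Q * R) $$ (a, b) = (\<Sum>x<m. (\<Sum>y<m. P $$ (y, a) * Q $$ (y, x)) * R $$ (x, b))"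
  using assms by (subst mult_mult_entry[of _ k m]) auto

lemma blkdiag_rep_carrier [simp]: "blkdiag_rep k d Q \<in> carrier_mat (k * d) (k * d)"
  unfolding blkdiag_rep_def by simp

lemma blkdiag_rep_block_entry:
  assumes "t' < k" "t < k" "y < d" "x < d"
  shows "blkdiag_rep k d Q $$ (t' * d + y, t * d + x) = (if t' = t then Q $$ (y, x) else 0)"
  using assms block_index_less[of t' k y d] block_index_less[of t k x d]
  unfolding blkdiag_rep_def by simp

lemma transpose_mult_blkdiag_rep_entry:
  fixes X Q :: "real mat"
  assumes X: "X \<in> carrier_mat (k * d) r" and i: "i < r" and t: "t < k" and x: "x < d"
  shows "(transpose_mat X * blkdiag_rep k d Q) $$ (i, t * d + x) = (\<Sum>y<d. X $$ (t * d + y, i) * Q $$ (y, x))"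
proof -
  have "(transpose_mat X * blkdiag_rep k d Q) $$ (i, t * d + x)
      = (\<Sum>t'<k. \<Sum>y<d. if t' = t then X $$ (t * d + y, i) * Q $$ (y, x) else 0)"
    using X i t x block_index_less[OF t x] block_index_less[of _ k _ d]
    by (subst mult_mat_entry_blockwise[of _ r k d _ "k * d"])
       (auto intro!: sum.cong simp: blkdiag_rep_block_entry)
  then show ?thesis using t by (subst (asm) sum.swap) simp
qed

section \<open>Gramians of impulse responses\<close>

definition impulse_gram :: "real mat \<Rightarrow> real mat \<Rightarrow> real mat \<Rightarrow> real mat \<Rightarrow> nat \<Rightarrow> nat \<Rightarrow> real mat" where
  "impulse_gram A Bj Q Bi \<alpha> \<beta> = transpose_mat (A ^\<^sub>m \<alpha> * Bj) * Q * (A ^\<^sub>m \<beta> * Bi)"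

lemma impulse_gram_carrier [simp]:
  assumes "A \<in> carrier_mat m m" "Bj \<in> carrier_mat m mj" "Bi \<in> carrier_mat m mi" "Q \<in> carrier_mat m m"
  shows "impulse_gram A Bj Q Bi \<alpha> \<beta> \<in> carrier_mat mj mi"
  using assms unfolding impulse_gram_def by (auto intro!: mult_carrier_mat[of _ _ m])

lemma impulse_gram_entry:
  assumes A: "A \<in> carrier_mat m m" and Bj: "Bj \<in> carrier_mat m mj" and Bi: "Bi \<in> carrier_mat m mi"
    and Q: "Q \<in> carrier_mat m m" and "a < mj" "b < mi"
  shows "impulse_gram A Bj Q Bi \<alpha> \<beta> $$ (a, b)
    = (\<Sum>x<m. (\<Sum>y<m. (A ^\<^sub>m \<alpha> * Bj) $$ (y, a) * Q $$ (y, x)) * (A ^\<^sub>m \<beta> * Bi) $$ (x, b))"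
  unfolding impulse_gram_def using assms
  by (intro transpose_mult_mult_entry) (auto intro!: mult_carrier_mat[of _ m m])

lemma impulse_gram_similar:
  fixes A S Sinv Bj Bi Q :: "real mat"
  assumes A: "A \<in> carrier_mat m m" and S: "S \<in> carrier_mat m m" and Sinv: "Sinv \<in> carrier_mat m m"
    and inv: "S * Sinv = 1\<^sub>m m" "Sinv * S = 1\<^sub>m m"
    and Bj: "Bj \<in> carrier_mat m mj" and Bi: "Bi \<in> carrier_mat m mi" and Q: "Q \<in> carrier_mat m m"
  shows "impulse_gram (S * A * Sinv) (S * Bj) Q (S * Bi) p s = impulse_gram A Bj (transpose_mat S * Q * S) Bi p s"
proof -
  have Pj: "A ^\<^sub>m p * Bj \<in> carrier_mat m mj" and Pi: "A ^\<^sub>m s * Bi \<in> carrier_mat m mi"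
    using A Bj Bi by auto
  have "impulse_gram (S * A * Sinv) (S * Bj) Q (S * Bi) p s
      = transpose_mat (S * (A ^\<^sub>m p * Bj)) * Q * (S * (A ^\<^sub>m s * Bi))"
    unfolding impulse_gram_def using similar_pow_mult[OF A S Sinv inv] Bj Bi by simp
  also have "\<dots> = transpose_mat (A ^\<^sub>m p * Bj) * (transpose_mat S * Q * S) * (A ^\<^sub>m s * Bi)"
    using Pj Pi S Q
    by (simp add: transpose_mult[of _ m m _ mj] assoc_mult_mat[of _ mj m _ m _ mi]
        assoc_mult_mat[of _ mj m _ m _ m] assoc_mult_mat[of _ m m _ m _ mi])
  finally show ?thesis unfolding impulse_gram_def .
qed

lemma G_mat_carrier [simp]: "G_mat m T A Bl ml \<in> carrier_mat (Suc T * m) (T * ml)"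
  unfolding G_mat_def by simp

lemma G_mat_dim [simp]:
  "dim_row (G_mat m T A Bl ml) = Suc T * m" "dim_col (G_mat m T A Bl ml) = T * ml"
  unfolding G_mat_def by simp_all

lemma G_mat_block_entry:
  assumes "t < Suc T" "y < m" "s < T" "b < ml"
  shows "G_mat m T A Bl ml $$ (t * m + y, s * ml + b) = (if s < t then (A ^\<^sub>m (t - 1 - s) * Bl) $$ (y, b) else 0)"
  using assms block_index_less[of t "Suc T" y m] block_index_less[of s T b ml]
  unfolding G_mat_def by (simp add: Let_def)

lemma G_gram_entry:
  fixes A Bj Bi Q :: "real mat"
  assumes A: "A \<in> carrier_mat m m" and Bj: "Bj \<in> carrier_mat m mj" and Bi: "Bi \<in> carrier_mat m mi"
    and Q: "Q \<in> carrier_mat m m" and p: "p < T" and a: "a < mj" and s: "s < T" and b: "b < mi"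
  shows "(transpose_mat (G_mat m T A Bj mj) * blkdiag_rep (Suc T) m Q * G_mat m T A Bi mi) $$ (p * mj + a, s * mi + b)
    = (\<Sum>t<Suc T. if p < t \<and> s < t then impulse_gram A Bj Q Bi (t - 1 - p) (t - 1 - s) $$ (a, b) else 0)"
proof -
  let ?Gj = "G_mat m T A Bj mj" and ?Gi = "G_mat m T A Bi mi" and ?r = "p * mj + a" and ?c = "s * mi + b"
  have r: "?r < T * mj" and c: "?c < T * mi" using block_index_less p a s b by auto
  have GjQ: "transpose_mat ?Gj * blkdiag_rep (Suc T) m Q \<in> carrier_mat (T * mj) (Suc T * m)"
    using transpose_carrier_mat[THEN iffD2, OF G_mat_carrier] blkdiag_rep_carrier by (rule mult_carrier_mat)
  have "(transpose_mat ?Gj * blkdiag_rep (Suc T) m Q * ?Gi) $$ (?r, ?c)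
      = (\<Sum>t<Suc T. \<Sum>x<m. (transpose_mat ?Gj * blkdiag_rep (Suc T) m Q) $$ (?r, t * m + x) * ?Gi $$ (t * m + x, ?c))"
    using mult_mat_entry_blockwise[OF GjQ G_mat_carrier r c] .
  also have "\<dots> = (\<Sum>t<Suc T. \<Sum>x<m. (\<Sum>y<m. ?Gj $$ (t * m + y, ?r) * Q $$ (y, x)) * ?Gi $$ (t * m + x, ?c))"
    using transpose_mult_blkdiag_rep_entry[OF G_mat_carrier r] by simp
  also have "\<dots> = (\<Sum>t<Suc T. if p < t \<and> s < t then
        \<Sum>x<m. (\<Sum>y<m. (A ^\<^sub>m (t - 1 - p) * Bj) $$ (y, a) * Q $$ (y, x)) * (A ^\<^sub>m (t - 1 - s) * Bi) $$ (x, b)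
      else 0)"
    using p a s b by (intro sum.cong refl) (auto simp: G_mat_block_entry)
  finally show ?thesis unfolding impulse_gram_entry[OF A Bj Bi Q a b] .
qed

lemma eq_0_if_diagonal_sums_eq_0:
  fixes x :: "nat \<Rightarrow> nat \<Rightarrow> 'a::ab_group_add"
  assumes sums: "\<And>p s. p < T \<Longrightarrow> s < T \<Longrightarrow>
      (\<Sum>t<Suc T. if p < t \<and> s < t then x (t - 1 - p) (t - 1 - s) else 0) = 0"
    and "\<alpha> < T" "\<beta> < T"
  shows "x \<alpha> \<beta> = 0"
proof -
  define h where "h p s = (\<Sum>t<Suc T. if p < t \<and> s < t then x (t - 1 - p) (t - 1 - s) else 0)" for p s
  have h0: "h p s = 0" for p s
  proof (cases "p < T \<and> s < T")
    case True
    then show ?thesis unfolding h_def using sums by blast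
  next
    case False
    then show ?thesis unfolding h_def by (intro sum.neutral) auto
  qed
  define p s where "p = T - 1 - \<alpha>" and "s = T - 1 - \<beta>"
  have ps: "p < T" "s < T" "T - 1 - p = \<alpha>" "T - 1 - s = \<beta>"
    unfolding p_def s_def using assms by auto
  let ?tail = "\<Sum>t<T. if p < t \<and> s < t then x (t - 1 - p) (t - 1 - s) else 0"
  have "h p s = ?tail + x \<alpha> \<beta>"
    unfolding h_def using ps by (simp only: sum.lessThan_Suc) simp
  moreover have "h (Suc p) (Suc s) = ?tail"
  proof -
    have shift: "Suc t - 1 - Suc q = t - 1 - q" for t q :: nat by simp
    show ?thesis unfolding h_def by (subst sum.lessThan_Suc_shift) (simp only: shift, simp)
  qed
  ultimately show ?thesis using h0 by simp
qed

lemma G_gram_eq_0_imp_impulse_gram_eq_0: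
  fixes A Bj Bi Q :: "real mat"
  assumes A: "A \<in> carrier_mat m m" and Bj: "Bj \<in> carrier_mat m mj" and Bi: "Bi \<in> carrier_mat m mi"
    and Q: "Q \<in> carrier_mat m m"
    and gram: "transpose_mat (G_mat m T A Bj mj) * blkdiag_rep (Suc T) m Q * G_mat m T A Bi mi
      = 0\<^sub>m (T * mj) (T * mi)"
    and "\<alpha> < T" "\<beta> < T"
  shows "impulse_gram A Bj Q Bi \<alpha> \<beta> = 0\<^sub>m mj mi"
proof (rule eq_matI)
  fix a b assume "a < dim_row (0\<^sub>m mj mi)" "b < dim_col (0\<^sub>m mj mi)"
  then have a: "a < mj" and b: "b < mi" by auto
  have "(\<Sum>t<Suc T. if p < t \<and> s < t then impulse_gram A Bj Q Bi (t - 1 - p) (t - 1 - s) $$ (a, b) else 0) = 0"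
    if "p < T" "s < T" for p s
    using G_gram_entry[OF A Bj Bi Q that(1) a that(2) b] block_index_less that a b
    unfolding gram by simp
  then have "impulse_gram A Bj Q Bi \<alpha> \<beta> $$ (a, b) = 0"
    using eq_0_if_diagonal_sums_eq_0[where x = "\<lambda>\<alpha> \<beta>. impulse_gram A Bj Q Bi \<alpha> \<beta> $$ (a, b)"] assms
    by blast
  then show "impulse_gram A Bj Q Bi \<alpha> \<beta> $$ (a, b) = 0\<^sub>m mj mi $$ (a, b)" using a b by simp
qed (use impulse_gram_carrier[OF A Bj Bi Q] in auto)

lemma obs_stack_carrier [simp]: "obs_stack m k A B mB \<in> carrier_mat (k * mB) m"
  unfolding obs_stack_def by simp

lemma ctrb_mat_carrier [simp]: "ctrb_mat m k A B mB \<in> carrier_mat m (k * mB)"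
  unfolding ctrb_mat_def by simp

lemma obs_stack_block_entry:
  fixes A B :: "real mat"
  assumes A: "A \<in> carrier_mat m m" and B: "B \<in> carrier_mat m mB" and "p < k" "a < mB" "x < m"
  shows "obs_stack m k A B mB $$ (p * mB + a, x) = (A ^\<^sub>m p * B) $$ (x, a)"
proof -
  have "obs_stack m k A B mB $$ (p * mB + a, x) = (transpose_mat B * transpose_mat A ^\<^sub>m p) $$ (a, x)"
    using assms block_index_less[of p k a mB] unfolding obs_stack_def by simp
  also have "transpose_mat B * transpose_mat A ^\<^sub>m p = transpose_mat (A ^\<^sub>m p * B)"
    using A B by (simp add: transpose_mult[of _ m m _ mB] transpose_pow_mat)
  also have "\<dots> $$ (a, x) = (A ^\<^sub>m p * B) $$ (x, a)"
    using assms by simp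
  finally show ?thesis .
qed

lemma ctrb_mat_block_entry:
  assumes "s < k" "b < mB" "x < m"
  shows "ctrb_mat m k A B mB $$ (x, s * mB + b) = (A ^\<^sub>m s * B) $$ (x, b)"
  using assms block_index_less[of s k b mB] unfolding ctrb_mat_def by simp

lemma obs_stack_ctrb_mat_entry:
  fixes A Bj Bi Q :: "real mat"
  assumes A: "A \<in> carrier_mat m m" and Bj: "Bj \<in> carrier_mat m mj" and Bi: "Bi \<in> carrier_mat m mi"
    and Q: "Q \<in> carrier_mat m m" and p: "p < k" and a: "a < mj" and s: "s < k" and b: "b < mi"
  shows "(obs_stack m k A Bj mj * Q * ctrb_mat m k A Bi mi) $$ (p * mj + a, s * mi + b)
     = impulse_gram A Bj Q Bi p s $$ (a, b)"
  using assms block_index_less[OF p a] block_index_less[OF s b]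
  by (subst mult_mult_entry[of _ "k * mj" m])
     (simp_all add: impulse_gram_entry obs_stack_block_entry ctrb_mat_block_entry)

lemma obs_stack_ctrb_mat_eq_0_iff:
  fixes A Bj Bi Q :: "real mat"
  assumes A: "A \<in> carrier_mat m m" and Bj: "Bj \<in> carrier_mat m mj" and Bi: "Bi \<in> carrier_mat m mi"
    and Q: "Q \<in> carrier_mat m m"
  shows "obs_stack m k A Bj mj * Q * ctrb_mat m k A Bi mi = 0\<^sub>m (k * mj) (k * mi)
    \<longleftrightarrow> (\<forall>p<k. \<forall>s<k. impulse_gram A Bj Q Bi p s = 0\<^sub>m mj mi)"
proof -
  have "obs_stack m k A Bj mj * Q * ctrb_mat m k A Bi mi \<in> carrier_mat (k * mj) (k * mi)"
    using Q by (auto intro!: mult_carrier_mat[of _ _ m])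
  moreover have "dim_row (impulse_gram A Bj Q Bi p s) = mj" "dim_col (impulse_gram A Bj Q Bi p s) = mi"
    for p s using impulse_gram_carrier[OF A Bj Bi Q] by auto
  ultimately show ?thesis
    by (auto simp: mat_eq_0_blockwise_iff obs_stack_ctrb_mat_entry[OF A Bj Bi Q] intro!: eq_matI)
qed

lemma obs_stack_mult_vec_block:
  fixes A B :: "real mat"
  assumes A: "A \<in> carrier_mat m m" and B: "B \<in> carrier_mat m mB" and x: "x \<in> carrier_vec m"
    and "p < k" "a < mB"
  shows "(obs_stack m k A B mB *\<^sub>v x) $ (p * mB + a) = (transpose_mat B *\<^sub>v (transpose_mat A ^\<^sub>m p *\<^sub>v x)) $ a"
proof -
  have "(obs_stack m k A B mB *\<^sub>v x) $ (p * mB + a) = ((transpose_mat B * transpose_mat A ^\<^sub>m p) *\<^sub>v x) $ a"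
    using assms block_index_less[of p k a mB] unfolding obs_stack_def
    by (simp add: scalar_prod_def)
  then show ?thesis using A B x by (simp add: assoc_mult_mat_vec[of _ mB m _ m])
qed

lemma ctrb_subspace_subset_unobs_subspace:
  fixes F Bo Bc :: "real mat"
  assumes F: "F \<in> carrier_mat n n" and Bo: "Bo \<in> carrier_mat n mo"
    and orth: "obs_stack n n F Bo mo * ctrb_mat n n F Bc mc = 0\<^sub>m (n * mo) (n * mc)"
  shows "ctrb_subspace n F Bc mc \<subseteq> unobs_subspace n (transpose_mat Bo) (transpose_mat F)"
proof
  fix x assume "x \<in> ctrb_subspace n F Bc mc"
  then obtain w where w: "w \<in> carrier_vec (n * mc)" and x: "x = ctrb_mat n n F Bc mc *\<^sub>v w"
    unfolding ctrb_subspace_def by auto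
  have xc: "x \<in> carrier_vec n" unfolding x using ctrb_mat_carrier w by (rule mult_mat_vec_carrier)
  have "obs_stack n n F Bo mo *\<^sub>v x = 0\<^sub>v (n * mo)"
    unfolding x assoc_mult_mat_vec[OF obs_stack_carrier ctrb_mat_carrier w, symmetric] orth
    using w by (intro eq_vecI) auto
  then have "(transpose_mat Bo *\<^sub>v (transpose_mat F ^\<^sub>m p *\<^sub>v x)) $ a = 0" if "p < n" "a < mo" for p a
    using obs_stack_mult_vec_block[OF F Bo xc that] block_index_less[OF that] by simp
  then have "transpose_mat Bo *\<^sub>v (transpose_mat F ^\<^sub>m p *\<^sub>v x) = 0\<^sub>v mo" if "p < n" for p
    using that Bo by (intro eq_vecI) auto
  then show "x \<in> unobs_subspace n (transpose_mat Bo) (transpose_mat F)"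
    using unobs_subspace_eq_finite_horizon[of "transpose_mat F" n "transpose_mat Bo" mo] F Bo xc by auto
qed

section \<open>The learning dynamics\<close>

lemma vsum_carrier: "(\<And>q. q < k \<Longrightarrow> f q \<in> carrier_vec d) \<Longrightarrow> vsum d f k \<in> carrier_vec d"
  by (induction k) auto

lemma vsum_index:
  "(\<And>q. q < k \<Longrightarrow> f q \<in> carrier_vec d) \<Longrightarrow> t < d \<Longrightarrow> vsum d f k $ t = (\<Sum>q<k. f q $ t)"
proof (induction k)
  case (Suc k)
  have "f k \<in> carrier_vec d" and "vsum d f k $ t = (\<Sum>q<k. f q $ t)" using Suc by auto
  then show ?case using Suc.prems(2) by simp
qed simp

lemma vsum_eq_single:
  assumes "\<And>q. q < k \<Longrightarrow> f q \<in> carrier_vec d" "\<And>q. q < k \<Longrightarrow> q \<noteq> i \<Longrightarrow> f q = 0\<^sub>v d" "i < k"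
  shows "vsum d f k = f i"
proof (rule eq_vecI)
  fix t assume "t < dim_vec (f i)"
  then have "t < d" using assms(1)[OF assms(3)] by auto
  then have "vsum d f k $ t = (\<Sum>q<k. f q $ t)" using assms(1) by (rule vsum_index[rotated])
  also have "\<dots> = (\<Sum>q<k. if q = i then f i $ t else 0)"
    using assms(2) \<open>t < d\<close> by (intro sum.cong) auto
  finally show "vsum d f k $ t = f i $ t" using assms(3) by simp
qed (use vsum_carrier[OF assms(1)] assms(1)[OF assms(3)] in auto)

lemma M_blk_carrier [simp]: "M_blk m T A B mi Q R \<gamma> l q \<in> carrier_mat (T * mi l) (T * mi q)"
  unfolding M_blk_def G_mat_def blkdiag_rep_def by auto

lemma dim_M_blk [simp]:
  "dim_row (M_blk m T A B mi Q R \<gamma> l q) = T * mi l" "dim_col (M_blk m T A B mi Q R \<gamma> l q) = T * mi q"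
  by (rule carrier_matD[OF M_blk_carrier])+

lemma M_blk_offdiag:
  assumes "l \<noteq> q"
  shows "M_blk m T A B mi Q R \<gamma> l q
     = \<gamma> l \<cdot>\<^sub>m (transpose_mat (G_mat m T A (B l) (mi l)) * blkdiag_rep (Suc T) m (Q l) * G_mat m T A (B q) (mi q))"
proof -
  have "transpose_mat (G_mat m T A (B l) (mi l)) * blkdiag_rep (Suc T) m (Q l) * G_mat m T A (B q) (mi q)
      \<in> carrier_mat (T * mi l) (T * mi q)"
    by (intro mult_carrier_mat[OF mult_carrier_mat[OF transpose_carrier_mat[THEN iffD2, OF G_mat_carrier]
          blkdiag_rep_carrier] G_mat_carrier])
  then show ?thesis unfolding M_blk_def using assms by simp
qed

lemma dim_c_blk [simp]: "dim_vec (c_blk m T A B mi Q z0 l) = T * mi l"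
  unfolding c_blk_def G_mat_def blkdiag_rep_def H_mat_def by simp

lemma dim_lq_step [simp]: "dim_vec (lq_step N m T A B mi Q R \<gamma> z0 dv U l) = dim_vec (dv l)"
  unfolding lq_step_def by simp

lemma lq_step_index:
  assumes U: "\<And>q. q < N \<Longrightarrow> U q \<in> carrier_vec (T * mi q)"
    and dv: "dv l \<in> carrier_vec (T * mi l)" and t: "t < T * mi l"
  shows "lq_step N m T A B mi Q R \<gamma> z0 dv U l $ t = U l $ t
    - (\<Sum>q<N. (M_blk m T A B mi Q R \<gamma> l q *\<^sub>v U q) $ t)
    - \<gamma> l * c_blk m T A B mi Q z0 l $ t - \<gamma> l * dv l $ t"
proof -
  have MU: "M_blk m T A B mi Q R \<gamma> l q *\<^sub>v U q \<in> carrier_vec (T * mi l)" if "q < N" for q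
    using M_blk_carrier U[OF that] by (rule mult_mat_vec_carrier)
  then have "vsum (T * mi l) (\<lambda>q. M_blk m T A B mi Q R \<gamma> l q *\<^sub>v U q) N $ t
      = (\<Sum>q<N. (M_blk m T A B mi Q R \<gamma> l q *\<^sub>v U q) $ t)"
    using t by (intro vsum_index)
  moreover have "vsum (T * mi l) (\<lambda>q. M_blk m T A B mi Q R \<gamma> l q *\<^sub>v U q) N \<in> carrier_vec (T * mi l)"
    using MU by (rule vsum_carrier)
  ultimately show ?thesis using dv t unfolding lq_step_def by simp
qed

lemma lq_step_diff:
  assumes Y: "\<And>q. q < N \<Longrightarrow> Y q \<in> carrier_vec (T * mi q)" and U: "\<And>q. q < N \<Longrightarrow> U q \<in> carrier_vec (T * mi q)"
    and l: "l < N" and dv: "dv l \<in> carrier_vec (T * mi l)" "dv' l \<in> carrier_vec (T * mi l)"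
  shows "lq_step N m T A B mi Q R \<gamma> z0 dv Y l - lq_step N m T A B mi Q R \<gamma> z0 dv' U l
    = (Y l - U l) - vsum (T * mi l) (\<lambda>q. M_blk m T A B mi Q R \<gamma> l q *\<^sub>v (Y q - U q)) N
      - \<gamma> l \<cdot>\<^sub>v (dv l - dv' l)"
proof (rule eq_vecI)
  let ?M = "M_blk m T A B mi Q R \<gamma> l"
  have MD: "?M q *\<^sub>v (Y q - U q) \<in> carrier_vec (T * mi l)" if "q < N" for q
    using M_blk_carrier minus_carrier_vec[OF Y[OF that] U[OF that]] by (rule mult_mat_vec_carrier)
  have VS: "vsum (T * mi l) (\<lambda>q. ?M q *\<^sub>v (Y q - U q)) N \<in> carrier_vec (T * mi l)"
    using MD by (rule vsum_carrier)
  fix t assume "t < dim_vec (Y l - U l - vsum (T * mi l) (\<lambda>q. ?M q *\<^sub>v (Y q - U q)) N - \<gamma> l \<cdot>\<^sub>v (dv l - dv' l))"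
  then have t: "t < T * mi l" using dv by simp
  have "vsum (T * mi l) (\<lambda>q. ?M q *\<^sub>v (Y q - U q)) N $ t = (\<Sum>q<N. (?M q *\<^sub>v (Y q - U q)) $ t)"
    using MD t by (rule vsum_index)
  also have "\<dots> = (\<Sum>q<N. (?M q *\<^sub>v Y q) $ t) - (\<Sum>q<N. (?M q *\<^sub>v U q) $ t)"

    unfolding sum_subtractf[symmetric] using Y U t
    by (intro sum.cong refl) (simp add: mult_minus_distrib_mat_vec[OF M_blk_carrier])
  finally show "(lq_step N m T A B mi Q R \<gamma> z0 dv Y l - lq_step N m T A B mi Q R \<gamma> z0 dv' U l) $ t
    = (Y l - U l - vsum (T * mi l) (\<lambda>q. ?M q *\<^sub>v (Y q - U q)) N - \<gamma> l \<cdot>\<^sub>v (dv l - dv' l)) $ t"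
    using t dv VS Y[OF l] U[OF l]
    by (simp add: lq_step_index[where U = Y and dv = dv and mi = mi and l = l, OF Y dv(1) t]
        lq_step_index[where U = U and dv = dv' and mi = mi and l = l, OF U dv(2) t] algebra_simps)
qed (use dv in simp)

lemma lq_step_diff_disturbance:
  assumes U: "\<And>q. q < N \<Longrightarrow> U q \<in> carrier_vec (T * mi q)"
    and dv: "dv l \<in> carrier_vec (T * mi l)" "dv' l \<in> carrier_vec (T * mi l)"
  shows "lq_step N m T A B mi Q R \<gamma> z0 dv U l - lq_step N m T A B mi Q R \<gamma> z0 dv' U l
    = - \<gamma> l \<cdot>\<^sub>v (dv l - dv' l)"
proof (rule eq_vecI)
  fix t assume "t < dim_vec (- \<gamma> l \<cdot>\<^sub>v (dv l - dv' l))"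
  then have t: "t < T * mi l" using dv by simp
  show "(lq_step N m T A B mi Q R \<gamma> z0 dv U l - lq_step N m T A B mi Q R \<gamma> z0 dv' U l) $ t
    = (- \<gamma> l \<cdot>\<^sub>v (dv l - dv' l)) $ t"
    using t dv by (simp add: lq_step_index[where U = U and mi = mi and l = l, OF U _ t] algebra_simps)
qed (use dv in simp)

(* A disturbance v in block i at step 0 moves only block i of the iterate, by -\<gamma> i v; one step
   later block j has moved by \<gamma> i M_ji v, which decoupling forces to be zero. *)
lemma dist_decoupled_imp_M_blk_mult_vec_eq_0:
  assumes gam: "\<gamma> i > 0" and ij: "i < N" "j < N" "i \<noteq> j"
    and dd: "dist_decoupled N m T A B mi Q R \<gamma> z0 i j"
    and v: "v \<in> carrier_vec (T * mi i)"
  shows "M_blk m T A B mi Q R \<gamma> j i *\<^sub>v v = 0\<^sub>v (T * mi j)"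
proof -
  let ?step = "lq_step N m T A B mi Q R \<gamma> z0" and ?M = "M_blk m T A B mi Q R \<gamma> j"
    and ?d0 = "\<lambda>(_::nat) l. 0\<^sub>v (T * mi l)"
  define U0 :: "nat \<Rightarrow> real vec" where "U0 l = 0\<^sub>v (T * mi l)" for l
  define d :: "nat \<Rightarrow> nat \<Rightarrow> real vec" where "d k l = (if k = 0 \<and> l = i then v else 0\<^sub>v (T * mi l))" for k l
  have U0: "U0 l \<in> carrier_vec (T * mi l)" and d_carrier: "d k l \<in> carrier_vec (T * mi l)" for k l
    unfolding U0_def d_def using v by auto
  have "dist_seq_in N (\<lambda>l. T * mi l) T i d"
    unfolding dist_seq_in_def using d_carrier by (simp add: d_def)
  then have traj: "lq_traj N m T A B mi Q R \<gamma> z0 d U0 2 j = lq_traj N m T A B mi Q R \<gamma> z0 ?d0 U0 2 j"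
    using dd U0 unfolding dist_decoupled_def by blast
  define Y1 U1 where "Y1 = ?step (d 0) U0" and "U1 = ?step (?d0 0) U0"
  have same: "?step (d 1) Y1 j = ?step (?d0 1) U1 j"
    using traj unfolding Y1_def U1_def numeral_2_eq_2 by simp
  have carrier: "Y1 q \<in> carrier_vec (T * mi q)" "U1 q \<in> carrier_vec (T * mi q)" for q
    unfolding Y1_def U1_def carrier_vec_def using d_carrier[of 0 q] by simp_all
  have kick: "Y1 q - U1 q = (if q = i then - \<gamma> i \<cdot>\<^sub>v v else 0\<^sub>v (T * mi q))" for q
  proof -
    have "Y1 q - U1 q = - \<gamma> q \<cdot>\<^sub>v (d 0 q - ?d0 0 q)"
      unfolding Y1_def U1_def using U0 d_carrier by (intro lq_step_diff_disturbance) auto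
    then show ?thesis using v by (auto simp: d_def intro!: eq_vecI)
  qed
  have "vsum (T * mi j) (\<lambda>q. ?M q *\<^sub>v (Y1 q - U1 q)) N = ?M i *\<^sub>v (Y1 i - U1 i)"
  proof (rule vsum_eq_single)
    show "?M q *\<^sub>v (Y1 q - U1 q) \<in> carrier_vec (T * mi j)" for q
      using M_blk_carrier minus_carrier_vec[OF carrier] by (rule mult_mat_vec_carrier)
    show "?M q *\<^sub>v (Y1 q - U1 q) = 0\<^sub>v (T * mi j)" if "q \<noteq> i" for q
      unfolding kick using that by (intro eq_vecI) auto
  qed (rule ij(1))
  also have "\<dots> = - \<gamma> i \<cdot>\<^sub>v (?M i *\<^sub>v v)"
    unfolding kick using mult_mat_vec[OF M_blk_carrier[of m T A B mi Q R \<gamma> j i] v] by simp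
  finally have sum: "vsum (T * mi j) (\<lambda>q. ?M q *\<^sub>v (Y1 q - U1 q)) N = - \<gamma> i \<cdot>\<^sub>v (?M i *\<^sub>v v)" .
  have diff: "?step (d 1) Y1 j - ?step (?d0 1) U1 j
      = (Y1 j - U1 j) - vsum (T * mi j) (\<lambda>q. ?M q *\<^sub>v (Y1 q - U1 q)) N - \<gamma> j \<cdot>\<^sub>v (d 1 j - ?d0 1 j)"
    using carrier ij(2) d_carrier by (intro lq_step_diff) simp_all
  show ?thesis
  proof (rule eq_vecI)
    fix t assume "t < dim_vec (0\<^sub>v (T * mi j))"
    then have t: "t < T * mi j" by simp
    have "(?step (d 1) Y1 j - ?step (?d0 1) U1 j) $ t = 0"
      unfolding same using t by simp
    then have "\<gamma> i * (?M i *\<^sub>v v) $ t = 0"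
      unfolding diff sum using kick[of j] ij t v by (simp add: d_def)
    then show "(?M i *\<^sub>v v) $ t = 0\<^sub>v (T * mi j) $ t" using gam t by simp
  qed simp
qed

lemma dist_decoupled_imp_G_gram_eq_0:
  assumes gam: "\<gamma> i > 0" "\<gamma> j > 0" and ij: "i < N" "j < N" "i \<noteq> j"
    and dd: "dist_decoupled N m T A B mi Q R \<gamma> z0 i j"
  shows "transpose_mat (G_mat m T A (B j) (mi j)) * blkdiag_rep (Suc T) m (Q j) * G_mat m T A (B i) (mi i)
    = 0\<^sub>m (T * mi j) (T * mi i)" (is "?K = _")
proof -
  let ?M = "M_blk m T A B mi Q R \<gamma> j i"
  have K: "?K \<in> carrier_mat (T * mi j) (T * mi i)"
    by (intro mult_carrier_mat[OF mult_carrier_mat[OF transpose_carrier_mat[THEN iffD2, OF G_mat_carrier]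
          blkdiag_rep_carrier] G_mat_carrier])
  show ?thesis
  proof (rule eq_matI)
    fix r c assume "r < dim_row (0\<^sub>m (T * mi j) (T * mi i))" "c < dim_col (0\<^sub>m (T * mi j) (T * mi i))"
    then have r: "r < T * mi j" and c: "c < T * mi i" by auto
    have "?M $$ (r, c) = (?M *\<^sub>v unit_vec (T * mi i) c) $ r" using r c by simp
    also have "\<dots> = 0"
      using dist_decoupled_imp_M_blk_mult_vec_eq_0[OF gam(1) ij dd unit_vec_carrier] r by simp
    finally have "\<gamma> j * ?K $$ (r, c) = 0"
      using M_blk_offdiag[of j i] ij(3) K r c by auto
    then show "?K $$ (r, c) = 0\<^sub>m (T * mi j) (T * mi i) $$ (r, c)" using gam(2) r c by simp
  qed (use K in auto)
qed

theorem corollary2: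
  fixes N m T :: nat and A :: "real mat" and B Q R :: "nat \<Rightarrow> real mat"
    and mi :: "nat \<Rightarrow> nat" and \<gamma> :: "nat \<Rightarrow> real" and z0 :: "real vec" and i j :: nat
  assumes A: "A \<in> carrier_mat m m"
    and B: "\<forall>l<N. B l \<in> carrier_mat m (mi l)"
    and Q: "\<forall>l<N. Q l \<in> carrier_mat m m \<and> sym_mat (Q l)"
    and R: "\<forall>l<N. R l \<in> carrier_mat (mi l) (mi l) \<and> sym_mat (R l)"
    and gam: "\<forall>l<N. \<gamma> l > 0"
    and z0: "z0 \<in> carrier_vec m"
    and ij: "i < N" "j < N" "i \<noteq> j"
    and dd: "dist_decoupled N m T A B mi Q R \<gamma> z0 i j"
  shows "obs_stack m T A (B j) (mi j) * Q j * ctrb_mat m T A (B i) (mi i) = 0\<^sub>m (T * mi j) (T * mi i)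
    \<and> (\<forall>S Sinv. pos_def_mat m (Q j) \<longrightarrow> T \<ge> m \<longrightarrow>
         pos_def_mat m S \<longrightarrow> S * S = Q j \<longrightarrow>
         Sinv \<in> carrier_mat m m \<longrightarrow> S * Sinv = 1\<^sub>m m \<longrightarrow> Sinv * S = 1\<^sub>m m \<longrightarrow>
         ctrb_subspace m (S * A * Sinv) (S * B i) (mi i)
           \<subseteq> unobs_subspace m (transpose_mat (S * B j)) (transpose_mat (S * A * Sinv)))"
proof (intro conjI allI impI)
  have Bi: "B i \<in> carrier_mat m (mi i)" and Bj: "B j \<in> carrier_mat m (mi j)"
    and Qj: "Q j \<in> carrier_mat m m" and \<gamma>: "\<gamma> i > 0" "\<gamma> j > 0" using B Q gam ij by auto
  have gram: "impulse_gram A (B j) (Q j) (B i) p s = 0\<^sub>m (mi j) (mi i)" if "p < T" "s < T" for p s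
    using G_gram_eq_0_imp_impulse_gram_eq_0[OF A Bj Bi Qj dist_decoupled_imp_G_gram_eq_0[OF \<gamma> ij dd] that] .
  then show "obs_stack m T A (B j) (mi j) * Q j * ctrb_mat m T A (B i) (mi i) = 0\<^sub>m (T * mi j) (T * mi i)"
    by (simp add: obs_stack_ctrb_mat_eq_0_iff[OF A Bj Bi Qj])
  fix S Sinv
  assume "T \<ge> m" and S: "pos_def_mat m S" and SS: "S * S = Q j" and Sinv: "Sinv \<in> carrier_mat m m"
    and inv: "S * Sinv = 1\<^sub>m m" "Sinv * S = 1\<^sub>m m"
  have Sc: "S \<in> carrier_mat m m" and St: "transpose_mat S = S"
    using S unfolding pos_def_mat_def sym_mat_def by auto
  have "impulse_gram (S * A * Sinv) (S * B j) (1\<^sub>m m) (S * B i) p s = 0\<^sub>m (mi j) (mi i)" if "p < m" "s < m" for p s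
    using impulse_gram_similar[OF A Sc Sinv inv Bj Bi one_carrier_mat] gram that \<open>T \<ge> m\<close> Sc
    by (simp add: St SS)
  then have "obs_stack m m (S * A * Sinv) (S * B j) (mi j) * ctrb_mat m m (S * A * Sinv) (S * B i) (mi i)
      = 0\<^sub>m (m * mi j) (m * mi i)"
    using obs_stack_ctrb_mat_eq_0_iff[of "S * A * Sinv" m "S * B j" "mi j" "S * B i" "mi i" "1\<^sub>m m"] A Sc Sinv Bi Bj
    by (auto simp: right_mult_one_mat[OF obs_stack_carrier])
  then show "ctrb_subspace m (S * A * Sinv) (S * B i) (mi i)
      \<subseteq> unobs_subspace m (transpose_mat (S * B j)) (transpose_mat (S * A * Sinv))"
    using A Sc Sinv Bj by (intro ctrb_subspace_subset_unobs_subspace) auto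
qed

end
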